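(* Let $\Delta_0\subset\mathbb{R}^d$ be the vertex set of a regular simplex of edge length $1$ with centroid at the origin. There exists $\varepsilon_0>0$ such that for every $\tau\in\mathbb{R}^d$ and $R\in O(d)$ with $\|\tau\|_2+\|R-I_d\|_2\le\varepsilon_0$, writing $\Delta'=\{Rx+\tau: x\in\Delta_0\}$, \[ \mathrm{dist}_H(\Delta_0,\Delta')\;\le\; d^2(d+1)\,\bigl(\mathrm{diam}(\Delta_0\cup\Delta')-1\bigr). \]
   Context: A regular simplex of edge length $1$ is given by its vertex set: $d+1$ points at pairwise distance exactly $1$. $\|\cdot\|_2$ on matrices is the operator norm. $\mathrm{diam}(A)=\sup_{x,y\in A}\|x-y\|_2$. For nonempty compact $A,B\subset\mathbb{R}^d$, $\mathrm{dist}_H(A,B)=\max\{\sup_{a\in A}\inf_{b\in B}\|a-b\|_2,\ \sup_{b\in B}\inf_{a\in A}\|a-b\|_2\}$. *)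

theory Defs
  imports "HOL-Analysis.Analysis"
begin

definition dist_H :: "'a::metric_space set \<Rightarrow> 'a set \<Rightarrow> real" where
  "dist_H A B = max (SUP a\<in>A. infdist a B) (SUP b\<in>B. infdist b A)"

definition regular_unit_simplex :: "(real^'n) set \<Rightarrow> bool" where
  "regular_unit_simplex S \<longleftrightarrow> finite S \<and> card S = CARD('n) + 1 \<and>
     (\<forall>x\<in>S. \<forall>y\<in>S. x \<noteq> y \<longrightarrow> dist x y = 1)"

definition centroid :: "(real^'n) set \<Rightarrow> real^'n" where
  "centroid S = (1 / real (card S)) *\<^sub>R (\<Sum>x\<in>S. x)"

end

theory Submission
  imports Defs
begin

text \<open>
  Let w x = R x + \<tau>, let u x = w x - x be the displacement of a vertex, m the largest
  displacement and \<delta> = diam(\<Delta>0 \<union> \<Delta>') - 1; then dist_H(\<Delta>0, \<Delta>') \<le> m.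
  For vertices i \<noteq> j the edge b = i - j is a unit vector with |b + u i - u j| = |w i - w j| = 1,
  while |b + u i| = |w i - j| and |b - u j| = |i - w j| are at most 1 + \<delta>. Expanding these
  squared norms bounds b \<bullet> u i from both sides by \<delta> + \<delta>^2/2 + 3 m^2/2. The d edges at i have
  Gram matrix (I + J)/2, so these d inner products control |u i| up to a factor sqrt(2d). Hence
  m \<le> sqrt(2d) (\<delta> + \<delta>^2/2 + 3 m^2/2), and once m is small the quadratic terms are absorbed,
  leaving m \<le> (4/3) sqrt(2d) \<delta>.
\<close>

definition simplex_frame :: "'a::real_inner set \<Rightarrow> bool" where
  "simplex_frame B \<longleftrightarrow> (\<forall>b\<in>B. norm b = 1) \<and> (\<forall>b\<in>B. \<forall>c\<in>B. b \<noteq> c \<longrightarrow> b \<bullet> c = 1/2)"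

lemma simplex_frame_inner_sum:
  assumes "simplex_frame B" and "finite B" and "b' \<in> B"
  shows "(\<Sum>b\<in>B. c b *\<^sub>R b) \<bullet> b' = (c b' + sum c B) / 2"
proof -
  have "(\<Sum>b\<in>B. c b *\<^sub>R b) \<bullet> b' = (\<Sum>b\<in>B. c b * (b \<bullet> b'))"
    by (simp add: inner_sum_left)
  also have "\<dots> = c b' * (b' \<bullet> b') + (\<Sum>b\<in>B-{b'}. c b * (b \<bullet> b'))"
    using assms(2,3) by (simp add: sum.remove)
  also have "(\<Sum>b\<in>B-{b'}. c b * (b \<bullet> b')) = (\<Sum>b\<in>B-{b'}. c b / 2)"
    using assms(1,3) unfolding simplex_frame_def by (intro sum.cong) auto
  also have "\<dots> = (sum c B - c b') / 2"
    using assms(2,3) by (simp add: sum_divide_distrib[symmetric] sum_diff1)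
  finally show ?thesis
    using assms(1,3) unfolding simplex_frame_def by (simp add: norm_eq_1 field_simps)
qed

lemma simplex_frame_independent:
  fixes B :: "'a::real_inner set"
  assumes "simplex_frame B" and "finite B"
  shows "independent B"
proof
  assume "dependent B"
  then obtain c v where "v \<in> B" "c v \<noteq> 0" and comb: "(\<Sum>b\<in>B. c b *\<^sub>R b) = 0"
    using dependent_finite[OF assms(2)] by blast
  have coeff: "c b = - sum c B" if "b \<in> B" for b
    using simplex_frame_inner_sum[OF assms that, of c] comb by simp
  have "sum c B = - (real (card B) * sum c B)"
    using sum.cong[OF refl coeff] by simp
  then have "(1 + real (card B)) * sum c B = 0"
    by (simp add: distrib_right)
  then have "sum c B = 0"
    by simp
  then show False
    using coeff[OF \<open>v \<in> B\<close>] \<open>c v \<noteq> 0\<close> by simp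
qed

text \<open>The Gram matrix of a simplex frame is (I + J)/2, whose inverse 2 I - 2 J/(card B + 1)
  is dominated by 2 I.\<close>
lemma simplex_frame_norm_le:
  assumes "simplex_frame B" and "finite B" and "u \<in> span B"
    and inner_le: "\<forall>b\<in>B. \<bar>b \<bullet> u\<bar> \<le> E"
  shows "(norm u)\<^sup>2 \<le> 2 * real (card B) * E\<^sup>2"
proof -
  obtain c where u: "u = (\<Sum>b\<in>B. c b *\<^sub>R b)"
    using assms(3) span_finite[OF assms(2)] by auto
  define a where "a b = b \<bullet> u" for b
  have ab: "a b = (c b + sum c B) / 2" if "b \<in> B" for b
    using simplex_frame_inner_sum[OF assms(1,2) that, of c] u by (simp add: a_def inner_commute)
  have "sum a B = (\<Sum>b\<in>B. (c b + sum c B) / 2)"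
    using ab by (intro sum.cong) auto
  then have sum_c: "sum c B = 2 * sum a B / (1 + real (card B))"
    by (simp add: sum_divide_distrib[symmetric] sum.distrib field_simps)
  have "(norm u)\<^sup>2 = (\<Sum>b\<in>B. c b * a b)"
    unfolding power2_norm_eq_inner a_def by (subst (1) u) (simp add: inner_sum_left)
  also have "\<dots> = (\<Sum>b\<in>B. 2 * (a b)\<^sup>2 - sum c B * a b)"
    using ab by (intro sum.cong) (auto simp: power2_eq_square field_simps)
  also have "\<dots> = 2 * (\<Sum>b\<in>B. (a b)\<^sup>2) - sum c B * sum a B"
    by (simp add: sum_subtractf sum_distrib_left)
  also have "\<dots> = 2 * (\<Sum>b\<in>B. (a b)\<^sup>2) - 2 * (sum a B)\<^sup>2 / (1 + real (card B))"
    by (simp add: sum_c power2_eq_square)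
  also have "\<dots> \<le> 2 * (\<Sum>b\<in>B. (a b)\<^sup>2)"
    by simp
  also have "\<dots> \<le> 2 * (\<Sum>b\<in>B. E\<^sup>2)"
  proof (intro mult_left_mono sum_mono)
    fix b assume "b \<in> B"
    then have "\<bar>a b\<bar> \<le> E"
      using inner_le by (simp add: a_def)
    then have "\<bar>a b\<bar>\<^sup>2 \<le> E\<^sup>2"
      by (rule power_mono) simp
    then show "(a b)\<^sup>2 \<le> E\<^sup>2"
      by simp
  qed simp
  finally show ?thesis by simp
qed

definition simplex_edges :: "'a::ab_group_add set \<Rightarrow> 'a \<Rightarrow> 'a set" where
  "simplex_edges S i = (\<lambda>j. i - j) ` (S - {i})"

lemma card_simplex_edges:
  assumes "finite S" and "i \<in> S"
  shows "card (simplex_edges S i) = card S - 1"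
proof -
  have "inj_on (\<lambda>j. i - j) (S - {i})" by (auto simp: inj_on_def)
  then show ?thesis
    using assms by (simp add: simplex_edges_def card_image)
qed

lemma simplex_frame_simplex_edges:
  fixes S :: "'a::real_inner set"
  assumes unit_dist: "\<forall>x\<in>S. \<forall>y\<in>S. x \<noteq> y \<longrightarrow> dist x y = 1" and "i \<in> S"
  shows "simplex_frame (simplex_edges S i)"
  unfolding simplex_frame_def
proof (intro conjI ballI impI)
  fix b assume "b \<in> simplex_edges S i"
  then show "norm b = 1"
    using assms by (auto simp: simplex_edges_def dist_norm)
next
  fix b b' assume "b \<in> simplex_edges S i" "b' \<in> simplex_edges S i" "b \<noteq> b'"
  then obtain j k where "j \<in> S" "k \<in> S" "j \<noteq> i" "k \<noteq> i" "j \<noteq> k" "b = i - j" "b' = i - k"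
    unfolding simplex_edges_def by auto
  moreover from this have "(i - j) \<bullet> (i - j) = 1" "(i - k) \<bullet> (i - k) = 1" "(j - k) \<bullet> (j - k) = 1"
    using assms by (auto simp: dist_norm simp flip: norm_eq_1)
  moreover have "(j - k) \<bullet> (j - k) = (i - k) \<bullet> (i - k) + (i - j) \<bullet> (i - j) - 2 * ((i - j) \<bullet> (i - k))"
    by (simp add: algebra_simps inner_commute)
  ultimately show "b \<bullet> b' = 1/2"
    by simp
qed

lemma span_simplex_edges:
  fixes S :: "(real^'n) set"
  assumes "regular_unit_simplex S" and "i \<in> S"
  shows "span (simplex_edges S i) = UNIV"
proof -
  have S: "finite S" "card S = CARD('n) + 1" "\<forall>x\<in>S. \<forall>y\<in>S. x \<noteq> y \<longrightarrow> dist x y = 1"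
    using assms(1) unfolding regular_unit_simplex_def by auto
  have "finite (simplex_edges S i)"
    using S(1) by (simp add: simplex_edges_def)
  then have "independent (simplex_edges S i)"
    using simplex_frame_independent simplex_frame_simplex_edges[OF S(3) assms(2)] by blast
  moreover have "card (simplex_edges S i) = CARD('n)"
    using card_simplex_edges[OF S(1) assms(2)] S(2) by simp
  ultimately have "UNIV \<subseteq> span (simplex_edges S i)"
    by (intro card_ge_dim_independent) auto
  then show ?thesis by auto
qed

lemma norm_le_if_sum_eq_0:
  fixes S :: "'a::real_normed_vector set"
  assumes "finite S" and "(\<Sum>y\<in>S. y) = 0" and "x \<in> S" and "\<forall>y\<in>S. dist x y \<le> r"
  shows "norm x \<le> r"
proof -
  have "(\<Sum>y\<in>S. x - y) = real (card S) *\<^sub>R x"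
    by (simp only: sum_subtractf sum_constant_scaleR assms(2) diff_zero)
  then have "real (card S) * norm x = norm (\<Sum>y\<in>S. x - y)"
    by simp
  also have "\<dots> \<le> (\<Sum>y\<in>S. dist x y)"
    unfolding dist_norm by (rule norm_sum)
  also have "\<dots> \<le> real (card S) * r"
    using sum_mono[of S "dist x" "\<lambda>_. r"] assms(4) by simp
  moreover have "0 < real (card S)"
    using assms(1,3) card_gt_0_iff by auto
  ultimately show ?thesis
    by (meson mult_le_cancel_left_pos order.trans)
qed

lemma regular_unit_simplex_norm_le_1:
  assumes "regular_unit_simplex S" and "centroid S = 0" and "x \<in> S"
  shows "norm x \<le> 1"
proof (rule norm_le_if_sum_eq_0)
  show "finite S" and "(\<Sum>y\<in>S. y) = 0"
    using assms(1,2) by (auto simp: regular_unit_simplex_def centroid_def)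
  show "\<forall>y\<in>S. dist x y \<le> 1"
  proof
    fix y assume "y \<in> S"
    then show "dist x y \<le> 1"
      using assms(1,3) by (cases "x = y") (auto simp: regular_unit_simplex_def)
  qed
qed fact

lemma regular_unit_simplex_diameter_ge_1:
  fixes S :: "(real^'n) set"
  assumes "regular_unit_simplex S" and "S \<subseteq> T" and "bounded T"
  shows "1 \<le> diameter T"
proof -
  have S: "finite S" "card S = CARD('n) + 1" "\<forall>x\<in>S. \<forall>y\<in>S. x \<noteq> y \<longrightarrow> dist x y = 1"
    using assms(1) by (auto simp: regular_unit_simplex_def)
  then obtain x where "x \<in> S"
    by fastforce
  have "S - {x} \<noteq> {}"
  proof
    assume "S - {x} = {}"
    then have "card S \<le> 1"
      using card_mono[of "{x}" S] by auto
    then show False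
      using S(2) by simp
  qed
  then obtain y where "y \<in> S" "y \<noteq> x"
    by auto
  then show ?thesis
    using \<open>x \<in> S\<close> S assms(2,3) diameter_bounded_bound[of T x y] by auto
qed

text \<open>p and q are the displacements of the endpoints of the unit edge b under an isometry,
  and 1 + \<delta> bounds the diameter of the configuration together with its image.\<close>
lemma edge_inner_displacement_le:
  fixes b p q :: "'a::real_inner"
  assumes "norm b = 1" and "norm (b + p - q) = 1"
    and "norm (b + p) \<le> 1 + \<delta>" and "norm (b - q) \<le> 1 + \<delta>"
    and "norm p \<le> m" and "norm q \<le> m"
  shows "\<bar>b \<bullet> p\<bar> \<le> \<delta> + \<delta>\<^sup>2/2 + 3/2 * m\<^sup>2"
proof -
  have sq_le: "x \<bullet> x \<le> r\<^sup>2" if "norm x \<le> r" for x :: 'a and r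
    using that by (metis norm_ge_zero power2_norm_eq_inner power_mono)
  have "b \<bullet> b = 1" and "(b + p - q) \<bullet> (b + p - q) = 1"
    using assms(1,2) by (simp_all add: norm_eq_1)
  moreover have "(b + p) \<bullet> (b + p) \<le> (1 + \<delta>)\<^sup>2" and "(b - q) \<bullet> (b - q) \<le> (1 + \<delta>)\<^sup>2"
    and "p \<bullet> p \<le> m\<^sup>2" and "q \<bullet> q \<le> m\<^sup>2"
    using assms(3-6) by (simp_all add: sq_le)
  moreover have "- (m\<^sup>2) \<le> p \<bullet> q"
    using Cauchy_Schwarz_ineq2[of p q] mult_mono[OF assms(5,6)] norm_ge_zero[of p] assms(5)
    by (smt (verit) norm_ge_zero power2_eq_square)
  moreover have "(b + p - q) \<bullet> (b + p - q)
      = b \<bullet> b + p \<bullet> p + q \<bullet> q + 2 * (b \<bullet> p) - 2 * (b \<bullet> q) - 2 * (p \<bullet> q)"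
    and "(b + p) \<bullet> (b + p) = b \<bullet> b + p \<bullet> p + 2 * (b \<bullet> p)"
    and "(b - q) \<bullet> (b - q) = b \<bullet> b + q \<bullet> q - 2 * (b \<bullet> q)"
    and "(1 + \<delta>)\<^sup>2 = 1 + 2 * \<delta> + \<delta>\<^sup>2"
    by (simp_all add: algebra_simps inner_commute power2_eq_square)
  moreover have "0 \<le> p \<bullet> p" "0 \<le> m\<^sup>2" by simp_all
  ultimately show ?thesis
    unfolding abs_le_iff by (intro conjI) linarith+
qed

lemma isometry_displacement_le:
  fixes S :: "(real^'n) set" and w :: "real^'n \<Rightarrow> real^'n"
  defines "\<delta> \<equiv> diameter (S \<union> w ` S) - 1"
  assumes simplex: "regular_unit_simplex S"
    and isometry: "\<forall>x\<in>S. \<forall>y\<in>S. dist (w x) (w y) = dist x y"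
    and displ: "\<forall>x\<in>S. norm (w x - x) \<le> m" and "i \<in> S"
  shows "norm (w i - i) \<le> sqrt (2 * real CARD('n)) * (\<delta> + \<delta>\<^sup>2/2 + 3/2 * m\<^sup>2)"
proof -
  define E where "E = \<delta> + \<delta>\<^sup>2/2 + 3/2 * m\<^sup>2"
  have S: "finite S" "card S = CARD('n) + 1" and unit_dist: "\<forall>x\<in>S. \<forall>y\<in>S. x \<noteq> y \<longrightarrow> dist x y = 1"
    using simplex unfolding regular_unit_simplex_def by auto
  have bounded: "bounded (S \<union> w ` S)"
    using S(1) by (simp add: finite_imp_bounded)
  have dist_le: "dist x y \<le> 1 + \<delta>" if "x \<in> S \<union> w ` S" "y \<in> S \<union> w ` S" for x y
    using diameter_bounded_bound[OF bounded that] by (simp add: \<delta>_def)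
  have "0 \<le> \<delta>"
    using regular_unit_simplex_diameter_ge_1[OF simplex _ bounded] by (simp add: \<delta>_def)
  then have "0 \<le> E"
    by (simp add: E_def)
  have "\<bar>b \<bullet> (w i - i)\<bar> \<le> E" if "b \<in> simplex_edges S i" for b
  proof -
    obtain j where j: "j \<in> S" "j \<noteq> i" "b = i - j"
      using \<open>b \<in> simplex_edges S i\<close> by (auto simp: simplex_edges_def)
    have "norm b = 1"
      using unit_dist j \<open>i \<in> S\<close> by (simp add: dist_norm)
    moreover have "norm (b + (w i - i) - (w j - j)) = 1"
      using isometry unit_dist j \<open>i \<in> S\<close> by (simp add: dist_norm)
    moreover have "norm (b + (w i - i)) \<le> 1 + \<delta>" and "norm (b - (w j - j)) \<le> 1 + \<delta>"
      using dist_le[of "w i" j] dist_le[of i "w j"] j \<open>i \<in> S\<close> by (simp_all add: j(3) dist_norm)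
    ultimately show ?thesis
      unfolding E_def
      by (rule edge_inner_displacement_le) (use displ j \<open>i \<in> S\<close> in auto)
  qed
  moreover have "finite (simplex_edges S i)"
    using S(1) by (simp add: simplex_edges_def)
  ultimately have "(norm (w i - i))\<^sup>2 \<le> 2 * real (card (simplex_edges S i)) * E\<^sup>2"
    using simplex_frame_norm_le[OF simplex_frame_simplex_edges[OF unit_dist \<open>i \<in> S\<close>]]
      span_simplex_edges[OF simplex \<open>i \<in> S\<close>]
    by blast
  also have "\<dots> = (sqrt (2 * real CARD('n)) * E)\<^sup>2"
    using card_simplex_edges[OF S(1) \<open>i \<in> S\<close>] S(2) by (simp add: power_mult_distrib)
  finally show ?thesis
    unfolding E_def[symmetric] using \<open>0 \<le> E\<close> by (simp add: power2_le_iff_abs_le)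
qed

lemma dist_H_image_le:
  fixes f :: "'a::metric_space \<Rightarrow> 'a"
  assumes "S \<noteq> {}" and "\<forall>x\<in>S. dist x (f x) \<le> m"
  shows "dist_H S (f ` S) \<le> m"
proof -
  have "infdist x (f ` S) \<le> m" if "x \<in> S" for x
    using infdist_le[of "f x" "f ` S" x] assms(2) that by fastforce
  moreover have "infdist (f x) S \<le> m" if "x \<in> S" for x
    using infdist_le[OF that, of "f x"] assms(2) that by (metis dist_commute order_trans)
  ultimately show ?thesis
    unfolding dist_H_def using assms(1) by (auto intro!: cSUP_least)
qed

lemma absorb_quadratic_terms:
  fixes K \<delta> m \<epsilon> :: real
  assumes "0 \<le> \<delta>" and "0 \<le> m" and "m \<le> \<epsilon>" and "1 \<le> K" and "12 * K * \<epsilon> \<le> 1"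
    and m_le: "m \<le> K * (\<delta> + \<delta>\<^sup>2/2 + 3/2 * m\<^sup>2)"
  shows "m \<le> 4/3 * K * \<delta>"
proof -
  have "1 * \<delta> \<le> K * \<delta>"
    using assms(1,4) by (rule mult_right_mono[rotated])
  then have K\<delta>: "\<delta> \<le> K * \<delta>" "4/3 * K * \<delta> = 4/3 * (K * \<delta>)"
    by simp_all
  show ?thesis
  proof (cases "\<epsilon> \<le> \<delta>")
    case True
    then show ?thesis
      using K\<delta> assms(1,3) by linarith
  next
    case False
    have "K * \<delta>\<^sup>2 \<le> K * (\<epsilon> * \<delta>)" and "K * m\<^sup>2 \<le> K * (\<epsilon> * m)"
      using False assms by (simp_all add: power2_eq_square mult_left_mono mult_right_mono)
    then have m_bound: "m \<le> K * \<delta> + (K * \<epsilon>) * \<delta> / 2 + 3/2 * (K * \<epsilon>) * m"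
      using m_le by (simp add: algebra_simps)
    have K\<epsilon>: "K * \<epsilon> \<le> 1/12"
      using assms(5) by simp
    have "(K * \<epsilon>) * \<delta> \<le> 1/12 * \<delta>" and "(K * \<epsilon>) * m \<le> 1/12 * m"
      using mult_right_mono[OF K\<epsilon> assms(1)] mult_right_mono[OF K\<epsilon> assms(2)] .
    then show ?thesis
      using m_bound K\<delta> assms(1) by linarith
  qed
qed

lemma one_le_sqrt_two_card: "1 \<le> sqrt (2 * real CARD('n::finite))"
proof -
  have "1 \<le> real CARD('n)"
    by simp
  then have "1 \<le> 2 * real CARD('n)"
    by linarith
  then show ?thesis
    by simp
qed

lemma dist_H_isometric_image_le:
  fixes S :: "(real^'n) set" and w :: "real^'n \<Rightarrow> real^'n"
  defines "K \<equiv> sqrt (2 * real CARD('n))"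
  assumes simplex: "regular_unit_simplex S"
    and isometry: "\<forall>x\<in>S. \<forall>y\<in>S. dist (w x) (w y) = dist x y"
    and small: "\<forall>x\<in>S. norm (w x - x) \<le> \<epsilon>" and "12 * K * \<epsilon> \<le> 1"
  shows "dist_H S (w ` S) \<le> 4/3 * K * (diameter (S \<union> w ` S) - 1)"
proof -
  have "finite S" and "S \<noteq> {}"
    using simplex by (auto simp: regular_unit_simplex_def)
  define m where "m = Max ((\<lambda>x. norm (w x - x)) ` S)"
  have displ: "\<forall>x\<in>S. norm (w x - x) \<le> m"
    using \<open>finite S\<close> by (simp add: m_def)
  have "m \<in> (\<lambda>x. norm (w x - x)) ` S"
    unfolding m_def using \<open>finite S\<close> \<open>S \<noteq> {}\<close> by (intro Max_in) auto
  then obtain i where "i \<in> S" and m: "m = norm (w i - i)"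
    by blast
  define \<delta> where "\<delta> = diameter (S \<union> w ` S) - 1"
  have "0 \<le> \<delta>"
    using regular_unit_simplex_diameter_ge_1[OF simplex] \<open>finite S\<close>
    by (simp add: \<delta>_def finite_imp_bounded)
  moreover have "m \<le> \<epsilon>"
    using small \<open>i \<in> S\<close> by (simp add: m)
  moreover have "1 \<le> K"
    unfolding K_def by (rule one_le_sqrt_two_card)
  moreover have "m \<le> K * (\<delta> + \<delta>\<^sup>2/2 + 3/2 * m\<^sup>2)"
    using isometry_displacement_le[OF simplex isometry displ \<open>i \<in> S\<close>]
    unfolding m K_def \<delta>_def .
  ultimately have "m \<le> 4/3 * K * \<delta>"
    using absorb_quadratic_terms \<open>12 * K * \<epsilon> \<le> 1\<close> m by simp
  then show ?thesis
    using dist_H_image_le[OF \<open>S \<noteq> {}\<close>, of w m] displ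
    by (simp add: \<delta>_def dist_norm norm_minus_commute)
qed

lemma four_thirds_sqrt_le:
  fixes d :: real
  assumes "1 \<le> d"
  shows "4/3 * sqrt (2 * d) \<le> d\<^sup>2 * (d + 1)"
proof -
  have "d * 1 \<le> d * d"
    using assms by (intro mult_left_mono) auto
  then have "sqrt (2 * d) \<le> 3/2 * d"
    using assms by (intro real_le_lsqrt) (auto simp: power2_eq_square)
  moreover have "d * 2 \<le> (d * d) * (d + 1)"
    using assms \<open>d * 1 \<le> d * d\<close> by (intro mult_mono) auto
  ultimately show ?thesis
    by (simp add: power2_eq_square)
qed

lemma dist_orthogonal_matrix_mult:
  fixes R :: "real^'n^'n"
  assumes "orthogonal_matrix R"
  shows "dist (R *v x) (R *v y) = dist x y"
  using assms
  by (simp add: dist_norm orthogonal_transformation_matrix orthogonal_transformation_norm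
      flip: matrix_vector_mult_diff_distrib)

lemma norm_affine_displacement_le:
  fixes R :: "real^'n^'n"
  assumes "norm x \<le> 1"
  shows "norm (R *v x + \<tau> - x) \<le> norm \<tau> + onorm (\<lambda>x. (R - mat 1) *v x)"
proof -
  have "norm (R *v x + \<tau> - x) \<le> norm ((R - mat 1) *v x) + norm \<tau>"
    using norm_triangle_ineq[of "(R - mat 1) *v x" \<tau>]
    by (simp add: matrix_vector_mult_diff_rdistrib algebra_simps)
  also have "norm ((R - mat 1) *v x) \<le> onorm (\<lambda>x. (R - mat 1) *v x) * norm x"
    by (rule onorm[OF matrix_vector_mul_bounded_linear])
  also have "\<dots> \<le> onorm (\<lambda>x. (R - mat 1) *v x)"
    using assms by (intro mult_left_le onorm_pos_le matrix_vector_mul_bounded_linear) simp_all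
  finally show ?thesis
    by simp
qed

theorem mainTheorem12:
  fixes \<Delta>0 :: "(real^'n) set"
  assumes "regular_unit_simplex \<Delta>0"
    and "centroid \<Delta>0 = 0"
  shows "\<exists>\<epsilon>0>0. \<forall>(\<tau>::real^'n) (R::real^'n^'n).
           orthogonal_matrix R \<and> norm \<tau> + onorm (\<lambda>x. (R - mat 1) *v x) \<le> \<epsilon>0 \<longrightarrow>
           dist_H \<Delta>0 ((\<lambda>x. R *v x + \<tau>) ` \<Delta>0)
             \<le> real (CARD('n))^2 * real (CARD('n) + 1)
                * (diameter (\<Delta>0 \<union> (\<lambda>x. R *v x + \<tau>) ` \<Delta>0) - 1)"
proof -
  define K where "K = sqrt (2 * real CARD('n))"
  have "1 \<le> K"
    unfolding K_def by (rule one_le_sqrt_two_card)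
  show ?thesis
  proof (intro exI[of _ "1 / (12 * K)"] conjI allI impI)
    show "0 < 1 / (12 * K)"
      using \<open>1 \<le> K\<close> by simp
    fix \<tau> :: "real^'n" and R :: "real^'n^'n"
    assume H: "orthogonal_matrix R \<and> norm \<tau> + onorm (\<lambda>x. (R - mat 1) *v x) \<le> 1 / (12 * K)"
    define w where "w = (\<lambda>x. R *v x + \<tau>)"
    have diam: "1 \<le> diameter (\<Delta>0 \<union> w ` \<Delta>0)"
      using assms(1)
      by (intro regular_unit_simplex_diameter_ge_1) (auto simp: regular_unit_simplex_def finite_imp_bounded)
    have "\<forall>x\<in>\<Delta>0. \<forall>y\<in>\<Delta>0. dist (w x) (w y) = dist x y"
      using H by (simp add: w_def dist_orthogonal_matrix_mult)
    moreover have "\<forall>x\<in>\<Delta>0. norm (w x - x) \<le> 1 / (12 * K)"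
      using norm_affine_displacement_le[OF regular_unit_simplex_norm_le_1[OF assms]] H
      unfolding w_def by (meson order_trans)
    ultimately have "dist_H \<Delta>0 (w ` \<Delta>0) \<le> 4/3 * K * (diameter (\<Delta>0 \<union> w ` \<Delta>0) - 1)"
      using dist_H_isometric_image_le[OF assms(1)] \<open>1 \<le> K\<close> unfolding K_def by simp
    also have "\<dots> \<le> real (CARD('n))^2 * real (CARD('n) + 1) * (diameter (\<Delta>0 \<union> w ` \<Delta>0) - 1)"
      using four_thirds_sqrt_le[of "real CARD('n)"] diam
      by (intro mult_right_mono) (simp_all add: K_def add.commute)
    finally show "dist_H \<Delta>0 ((\<lambda>x. R *v x + \<tau>) ` \<Delta>0)
        \<le> real (CARD('n))^2 * real (CARD('n) + 1) * (diameter (\<Delta>0 \<union> (\<lambda>x. R *v x + \<tau>) ` \<Delta>0) - 1)"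
      unfolding w_def .
  qed
qed

end
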